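(* Fix integers $1\le a_1<a_2$, and let $\mathcal{A}$ be an infinite set of primes $n>2a_2$. Let $\{\mathcal{B}_n\}_{n\in\mathcal{A}}$ be any sequence where each $\mathcal{B}_n$ is a real orthonormal basis of $\mathbb{R}^n$ consisting of eigenvectors of $A(C_n(a_1,a_2))$. Then there exist $p\in(0,1)$, a sequence of vertex subsets $S_n\subset\{0,\dots,n-1\}$ with $\lim_{n\to\infty}|S_n|/n=p$, and a sequence of eigenvectors $\varphi_n\in\mathcal{B}_n$, such that $\mu_{\varphi_n}(S_n)$ does not converge to $p$ as $n\to\infty$, $n\in\mathcal{A}$.
   Context: A circulant graph $C_n(a_1,a_2)$, with integers $1\le a_1<a_2\le n/2$, has vertex set $V=\{0,1,\dots,n-1\}$, and $i\sim j$ if and only if $i-j\equiv \pm a_1$ or $\pm a_2 \pmod n$; it is 4-regular. Its adjacency matrix $A(C_n(a_1,a_2))$ is the $n\times n$ matrix with $A_{ij}=1$ if $i\sim j$ and $0$ otherwise. For a unit vector $\psi\in\mathbb{R}^n$, $\mu_\psi(S)=\sum_{v\in S}|\psi(v)|^2$ for $S\subset V$. *)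

theory Defs
  imports "HOL-Analysis.Analysis" "HOL-Number_Theory.Number_Theory"
begin

text \<open>Vectors of R^n are represented as functions nat => real; only the
  coordinates 0..n-1 are meaningful, and we require vectors to vanish
  outside {..<n} so that they are determined by their coordinates.\<close>

definition is_vec :: "nat \<Rightarrow> (nat \<Rightarrow> real) \<Rightarrow> bool" where
  "is_vec n v \<longleftrightarrow> (\<forall>i\<ge>n. v i = 0)"

definition circ_adj :: "nat \<Rightarrow> nat \<Rightarrow> nat \<Rightarrow> nat \<Rightarrow> nat \<Rightarrow> bool" where
  "circ_adj n a1 a2 i j \<longleftrightarrow>
     [int i - int j = int a1] (mod int n) \<or> [int i - int j = - int a1] (mod int n) \<or>
     [int i - int j = int a2] (mod int n) \<or> [int i - int j = - int a2] (mod int n)"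

definition circ_matrix :: "nat \<Rightarrow> nat \<Rightarrow> nat \<Rightarrow> nat \<Rightarrow> nat \<Rightarrow> real" where
  "circ_matrix n a1 a2 i j = (if circ_adj n a1 a2 i j then 1 else 0)"

definition is_eigvec :: "nat \<Rightarrow> (nat \<Rightarrow> nat \<Rightarrow> real) \<Rightarrow> (nat \<Rightarrow> real) \<Rightarrow> bool" where
  "is_eigvec n M v \<longleftrightarrow> is_vec n v \<and> (\<exists>i<n. v i \<noteq> 0) \<and>
     (\<exists>ev::real. \<forall>i<n. (\<Sum>j<n. M i j * v j) = ev * v i)"

definition is_onb :: "nat \<Rightarrow> (nat \<Rightarrow> real) set \<Rightarrow> bool" where
  "is_onb n B \<longleftrightarrow> finite B \<and> (\<forall>b\<in>B. is_vec n b) \<and>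
     (\<forall>b\<in>B. (\<Sum>i<n. (b i)\<^sup>2) = 1) \<and>
     (\<forall>b\<in>B. \<forall>b'\<in>B. b \<noteq> b' \<longrightarrow> (\<Sum>i<n. b i * b' i) = 0) \<and>
     (\<forall>v. is_vec n v \<longrightarrow> (\<exists>c. \<forall>i<n. v i = (\<Sum>b\<in>B. c b * b i)))"

definition mu :: "(nat \<Rightarrow> real) \<Rightarrow> nat set \<Rightarrow> real" where
  "mu \<psi> S = (\<Sum>v\<in>S. \<bar>\<psi> v\<bar>\<^sup>2)"

end

theory Submission
  imports Defs
begin

text \<open>
  For a unit eigenvector b of A(C_n(a1,a2)) with eigenvalue 4 - \<lambda>,
  \<lambda> = \<Sum>v. (b v - b (v + a1))^2 + \<Sum>v. (b v - b (v + a2))^2.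
  Testing this quadratic form on a centred tent function, whose increments are bounded
  by the step and whose squared norm is of order n^3, and expanding it in the eigenbasis
  yields a non-constant eigenvector with \<lambda> = O(1/n^2); being non-constant, its
  eigenvalue differs from the degree 4, which forces it to have mean zero. As n is prime,
  v \<mapsto> v + a1 runs through a Hamiltonian cycle; following it from a sign change, the
  eigenvector stays O(m/n) on m consecutive vertices. Hence n div q such vertices form a
  set of density 1/q carrying mass O(1/q^2), which is below 1/(2q) once q is a large
  multiple of a1^2 + a2^2.
\<close>

section \<open>Circular shifts\<close>

definition circ_shift :: "nat \<Rightarrow> int \<Rightarrow> nat \<Rightarrow> nat" where
  "circ_shift n c v = nat ((int v + c) mod int n)"

lemma circ_shift_less: "0 < n \<Longrightarrow> circ_shift n c v < n"
  unfolding circ_shift_def by (simp add: nat_less_iff)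

lemma of_nat_circ_shift: "0 < n \<Longrightarrow> int (circ_shift n c v) = (int v + c) mod int n"
  unfolding circ_shift_def by simp

lemma circ_shift_of_nat: "circ_shift n (int a) v = (v + a) mod n"
  unfolding circ_shift_def by (metis nat_int of_nat_add zmod_int)

lemma circ_shift_inverse:
  assumes "v < n"
  shows "circ_shift n (- c) (circ_shift n c v) = v"
proof -
  have "int (circ_shift n (- c) (circ_shift n c v)) = ((int v + c) mod int n - c) mod int n"
    using assms by (simp add: of_nat_circ_shift)
  also have "\<dots> = int v"
    using assms by (simp add: mod_diff_left_eq)
  finally show ?thesis by simp
qed

lemma sum_circ_shift:
  assumes "0 < n"
  shows "(\<Sum>v<n. f (circ_shift n c v)) = (\<Sum>v<n. f v)"
proof -
  have undo: "circ_shift n c (circ_shift n (- c) v) = v" if "v < n" for v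
    using circ_shift_inverse[OF that, of "- c"] by simp
  show ?thesis
    by (rule sum.reindex_bij_witness[where i = "circ_shift n (- c)" and j = "circ_shift n c"])
       (simp_all add: circ_shift_inverse undo circ_shift_less[OF assms])
qed

lemma cong_diff_iff_circ_shift:
  assumes "j < n"
  shows "[int i - int j = c] (mod int n) \<longleftrightarrow> j = circ_shift n (- c) i"
proof -
  have "j = circ_shift n (- c) i \<longleftrightarrow> int j = (int i - c) mod int n"
    using assms of_nat_circ_shift[of n "- c" i] by auto
  also have "\<dots> \<longleftrightarrow> int n dvd int j - (int i - c)"
    using assms by (simp add: mod_eq_dvd_iff[symmetric])
  also have "int j - (int i - c) = - (int i - int j - c)"
    by simp
  also have "int n dvd - (int i - int j - c) \<longleftrightarrow> [int i - int j = c] (mod int n)"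
    by (simp only: dvd_minus_iff cong_def mod_eq_dvd_iff)
  finally show ?thesis ..
qed

lemma circ_shift_neq:
  assumes "0 < \<bar>c - c'\<bar>" and "\<bar>c - c'\<bar> < int n"
  shows "circ_shift n c i \<noteq> circ_shift n c' i"
proof
  assume eq: "circ_shift n c i = circ_shift n c' i"
  have n: "0 < n"
    using assms by simp
  have "(int i + c) mod int n = (int i + c') mod int n"
    using arg_cong[OF eq, of int] by (simp add: of_nat_circ_shift[OF n])
  then have "int n dvd (int i + c) - (int i + c')"
    by (simp only: mod_eq_dvd_iff)
  then have "int n dvd \<bar>c - c'\<bar>"
    by simp
  then show False
    using assms zdvd_not_zless by blast
qed

section \<open>The Laplacian quadratic form of the circulant graph\<close>

definition nbr_sum :: "nat \<Rightarrow> nat \<Rightarrow> nat \<Rightarrow> (nat \<Rightarrow> real) \<Rightarrow> nat \<Rightarrow> real" where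
  "nbr_sum n a1 a2 x i =
     x (circ_shift n (int a1) i) + x (circ_shift n (- int a1) i) +
     x (circ_shift n (int a2) i) + x (circ_shift n (- int a2) i)"

lemma circ_adj_iff_circ_shift:
  assumes "j < n"
  shows "circ_adj n a1 a2 i j \<longleftrightarrow>
    j \<in> (\<lambda>c. circ_shift n c i) ` {int a1, - int a1, int a2, - int a2}"
  unfolding circ_adj_def cong_diff_iff_circ_shift[OF assms] by auto

lemma circ_matrix_mult:
  assumes "1 \<le> a1" and "a1 < a2" and "2 * a2 < n"
  shows "(\<Sum>j<n. circ_matrix n a1 a2 i j * x j) = nbr_sum n a1 a2 x i"
proof -
  let ?C = "{int a1, - int a1, int a2, - int a2}"
  have n: "0 < n" using assms by simp
  have inj: "inj_on (\<lambda>c. circ_shift n c i) ?C"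
  proof (rule inj_onI, rule ccontr)
    fix c c' assume "c \<in> ?C" "c' \<in> ?C" "circ_shift n c i = circ_shift n c' i" "c \<noteq> c'"
    moreover have "\<bar>c - c'\<bar> < int n"
      using calculation(1,2) assms by auto
    ultimately show False
      using circ_shift_neq[of c c' n i] by simp
  qed
  have row: "{j \<in> {..<n}. circ_adj n a1 a2 i j} = (\<lambda>c. circ_shift n c i) ` ?C"
    using circ_adj_iff_circ_shift circ_shift_less[OF n] by auto
  have "(\<Sum>j<n. circ_matrix n a1 a2 i j * x j) = (\<Sum>j<n. if circ_adj n a1 a2 i j then x j else 0)"
    by (rule sum.cong) (simp_all add: circ_matrix_def)
  also have "\<dots> = (\<Sum>j\<in>{j \<in> {..<n}. circ_adj n a1 a2 i j}. x j)"
    by (rule sum.inter_filter[symmetric]) simp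
  also have "\<dots> = (\<Sum>c\<in>?C. x (circ_shift n c i))"
    by (rule sum.reindex_cong[OF inj row]) (rule refl)
  also have "\<dots> = nbr_sum n a1 a2 x i"
    using assms by (simp add: nbr_sum_def add.assoc)
  finally show ?thesis .
qed

lemma sum_nbr_sum: "0 < n \<Longrightarrow> (\<Sum>v<n. nbr_sum n a1 a2 x v) = 4 * (\<Sum>v<n. x v)"
  unfolding nbr_sum_def by (simp add: sum.distrib sum_circ_shift)

definition shift_energy :: "nat \<Rightarrow> nat \<Rightarrow> (nat \<Rightarrow> real) \<Rightarrow> real" where
  "shift_energy n a x = (\<Sum>v<n. (x v - x ((v + a) mod n))\<^sup>2)"

definition laplace_form :: "nat \<Rightarrow> nat \<Rightarrow> nat \<Rightarrow> (nat \<Rightarrow> real) \<Rightarrow> real" where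
  "laplace_form n a1 a2 x = (\<Sum>v<n. x v * (4 * x v - nbr_sum n a1 a2 x v))"

lemma shift_energy_nonneg: "0 \<le> shift_energy n a x"
  unfolding shift_energy_def by (simp add: sum_nonneg)

lemma laplace_form_eq_shift_energy:
  assumes "0 < n"
  shows "laplace_form n a1 a2 x = shift_energy n a1 x + shift_energy n a2 x"
proof -
  let ?corr = "\<lambda>c. \<Sum>v<n. x v * x (circ_shift n c v)"
  have corr_reflect: "?corr (- c) = ?corr c" for c
  proof -
    have "?corr (- c) = (\<Sum>v<n. x (circ_shift n c v) * x (circ_shift n (- c) (circ_shift n c v)))"
      by (rule sum_circ_shift[OF assms, symmetric])
    also have "\<dots> = ?corr c"
      by (rule sum.cong) (simp_all add: circ_shift_inverse mult.commute)
    finally show ?thesis .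
  qed
  have energy: "shift_energy n a x = 2 * (\<Sum>v<n. x v * x v) - 2 * ?corr (int a)" for a
  proof -
    have "shift_energy n a x = (\<Sum>v<n. x v * x v) - 2 * ?corr (int a)
        + (\<Sum>v<n. x (circ_shift n (int a) v) * x (circ_shift n (int a) v))"
      unfolding shift_energy_def circ_shift_of_nat
      by (simp add: power2_eq_square algebra_simps sum.distrib sum_subtractf sum_distrib_left)
    then show ?thesis
      using sum_circ_shift[OF assms, of "\<lambda>v. x v * x v"] by simp
  qed
  have "laplace_form n a1 a2 x = 4 * (\<Sum>v<n. x v * x v)
      - ?corr (int a1) - ?corr (- int a1) - ?corr (int a2) - ?corr (- int a2)"
    unfolding laplace_form_def nbr_sum_def
    by (simp add: algebra_simps sum.distrib sum_subtractf sum_distrib_left)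
  then show ?thesis
    using corr_reflect[of "int a1"] corr_reflect[of "int a2"] energy[of a1] energy[of a2]
    by linarith
qed

lemma shift_invariant_imp_const:
  fixes x :: "nat \<Rightarrow> 'a"
  assumes "coprime a n" and "\<forall>v<n. x ((v + a) mod n) = x v" and "v < n"
  shows "x v = x 0"
proof -
  have orbit: "x ((k * a) mod n) = x 0" for k
  proof (induction k)
    case (Suc k)
    have "(Suc k * a) mod n = ((k * a) mod n + a) mod n"
      by (metis add.commute mult_Suc mod_add_left_eq)
    then show ?case
      using assms(2,3) Suc.IH by (metis mod_less_divisor gr_zeroI less_nat_zero_code)
  qed simp
  obtain k where "[a * k = Suc 0] (mod n)"
    using cong_solve_coprime_nat[OF assms(1)] by blast
  then have "[k * v * a = v] (mod n)"
    using cong_scalar_right[of "a * k" 1 n v] by (simp add: mult_ac)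
  then have "(k * v * a) mod n = v"
    using assms(3) by (simp add: cong_def)
  then show ?thesis
    using orbit by metis
qed

section \<open>Expansion in an orthonormal eigenbasis\<close>

definition dot :: "nat \<Rightarrow> (nat \<Rightarrow> real) \<Rightarrow> (nat \<Rightarrow> real) \<Rightarrow> real" where
  "dot n x y = (\<Sum>i<n. x i * y i)"

lemma dot_commute: "dot n x y = dot n y x"
  unfolding dot_def by (simp add: mult.commute)

lemma dot_expansion:
  assumes "\<forall>i<n. y i = (\<Sum>b\<in>B. d b * b i)"
  shows "dot n x y = (\<Sum>b\<in>B. d b * dot n x b)"
proof -
  have "dot n x y = (\<Sum>i<n. x i * (\<Sum>b\<in>B. d b * b i))"
    unfolding dot_def by (rule sum.cong) (simp_all add: assms)
  also have "\<dots> = (\<Sum>i<n. \<Sum>b\<in>B. d b * (x i * b i))"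
    by (simp add: sum_distrib_left mult.left_commute)
  also have "\<dots> = (\<Sum>b\<in>B. d b * dot n x b)"
    unfolding dot_def by (subst sum.swap) (simp add: sum_distrib_left)
  finally show ?thesis .
qed

lemma onb_dot:
  assumes "is_onb n B" and "b \<in> B" and "b' \<in> B"
  shows "dot n b b' = (if b = b' then 1 else 0)"
proof -
  have "\<forall>b\<in>B. (\<Sum>i<n. (b i)\<^sup>2) = 1" and "\<forall>b\<in>B. \<forall>b'\<in>B. b \<noteq> b' \<longrightarrow> (\<Sum>i<n. b i * b' i) = 0"
    using assms(1) unfolding is_onb_def by blast+
  then show ?thesis
    using assms(2,3) unfolding dot_def by (simp add: power2_eq_square)
qed

lemma onb_expansion:
  assumes "is_onb n B" and "is_vec n x"
  shows "\<forall>i<n. x i = (\<Sum>b\<in>B. dot n x b * b i)"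
proof -
  obtain c where c: "\<forall>i<n. x i = (\<Sum>b\<in>B. c b * b i)"
    using assms unfolding is_onb_def by blast
  have "finite B"
    using assms(1) unfolding is_onb_def by blast
  have "dot n x b = c b" if "b \<in> B" for b
  proof -
    have "dot n x b = (\<Sum>b'\<in>B. c b' * dot n b b')"
      using dot_expansion[OF c, of b] by (simp add: dot_commute)
    also have "\<dots> = (\<Sum>b'\<in>B. if b = b' then c b' else 0)"
      by (rule sum.cong) (simp_all add: onb_dot[OF assms(1) that])
    also have "\<dots> = c b"
      using \<open>finite B\<close> that by simp
    finally show ?thesis .
  qed
  then show ?thesis
    using c by simp
qed

lemma onb_parseval:
  assumes "is_onb n B" and "is_vec n x"
  shows "dot n x x = (\<Sum>b\<in>B. (dot n x b)\<^sup>2)"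
  using dot_expansion[OF onb_expansion[OF assms], of x] by (simp add: power2_eq_square)

lemma eigvec_nbr_sum:
  assumes "1 \<le> a1" and "a1 < a2" and "2 * a2 < n"
    and "is_eigvec n (circ_matrix n a1 a2) b" and "dot n b b = 1"
  shows "\<forall>i<n. nbr_sum n a1 a2 b i = (4 - laplace_form n a1 a2 b) * b i"
proof -
  obtain ev where ev: "\<forall>i<n. nbr_sum n a1 a2 b i = ev * b i"
    using assms(4) circ_matrix_mult[OF assms(1-3)] unfolding is_eigvec_def by auto
  have "laplace_form n a1 a2 b = (\<Sum>v<n. (4 - ev) * (b v * b v))"
    unfolding laplace_form_def using ev by (intro sum.cong) (auto simp: algebra_simps)
  then have "laplace_form n a1 a2 b = (4 - ev) * dot n b b"
    by (simp add: dot_def sum_distrib_left)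
  then show ?thesis
    using ev assms(5) by simp
qed

lemma laplace_form_onb_expansion:
  assumes "0 < n" and "is_onb n B"
    and eig: "\<forall>b\<in>B. \<forall>i<n. nbr_sum n a1 a2 b i = (4 - laplace_form n a1 a2 b) * b i"
    and "is_vec n x"
  shows "laplace_form n a1 a2 x = (\<Sum>b\<in>B. laplace_form n a1 a2 b * (dot n x b)\<^sup>2)"
proof -
  have x: "\<forall>i<n. x i = (\<Sum>b\<in>B. dot n x b * b i)"
    by (rule onb_expansion[OF assms(2,4)])
  have "4 * x i - nbr_sum n a1 a2 x i = (\<Sum>b\<in>B. (dot n x b * laplace_form n a1 a2 b) * b i)"
    if "i < n" for i
  proof -
    have "4 * x i - nbr_sum n a1 a2 x i
        = (\<Sum>b\<in>B. 4 * (dot n x b * b i) - dot n x b * nbr_sum n a1 a2 b i)"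
      unfolding nbr_sum_def using x that circ_shift_less[OF assms(1)]
      by (simp add: sum_subtractf sum_distrib_left sum.distrib distrib_left)
    also have "\<dots> = (\<Sum>b\<in>B. (dot n x b * laplace_form n a1 a2 b) * b i)"
      by (intro sum.cong refl) (simp add: eig[rule_format, OF _ that] algebra_simps)
    finally show ?thesis .
  qed
  then have "dot n x (\<lambda>i. 4 * x i - nbr_sum n a1 a2 x i)
      = (\<Sum>b\<in>B. (dot n x b * laplace_form n a1 a2 b) * dot n x b)"
    by (intro dot_expansion) simp
  then show ?thesis
    unfolding laplace_form_def dot_def by (simp add: power2_eq_square mult_ac)
qed

lemma laplace_form_eq_0_imp_const:
  assumes "0 < n" and "coprime a1 n" and "laplace_form n a1 a2 x = 0" and "v < n"
  shows "x v = x 0"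
proof -
  have "shift_energy n a1 x = 0"
    using assms(3) laplace_form_eq_shift_energy[OF assms(1), of a1 a2 x] shift_energy_nonneg[of n a1 x]
      shift_energy_nonneg[of n a2 x] by linarith
  then have zero: "\<forall>v\<in>{..<n}. (x v - x ((v + a1) mod n))\<^sup>2 = 0"
    unfolding shift_energy_def
    by (subst (asm) sum_nonneg_eq_0_iff) (simp_all only: finite_lessThan zero_le_power2)
  have "\<forall>v<n. x ((v + a1) mod n) = x v"
  proof (intro allI impI)
    fix v assume "v < n"
    then have "(x v - x ((v + a1) mod n))\<^sup>2 = 0"
      using zero by blast
    then show "x ((v + a1) mod n) = x v"
      by simp
  qed
  then show ?thesis
    by (rule shift_invariant_imp_const[OF assms(2) _ assms(4)])
qed

lemma laplace_form_neq_0_if_not_orthogonal: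
  assumes "0 < n" and "coprime a1 n" and "(\<Sum>i<n. g i) = 0" and "dot n g b \<noteq> 0"
  shows "laplace_form n a1 a2 b \<noteq> 0"
proof
  assume "laplace_form n a1 a2 b = 0"
  then have const: "\<forall>v<n. b v = b 0"
    using laplace_form_eq_0_imp_const[OF assms(1,2), of a2 b] by blast
  have "dot n g b = (\<Sum>i<n. g i * b 0)"
    unfolding dot_def
  proof (rule sum.cong[OF refl])
    fix i assume "i \<in> {..<n}"
    then have "b i = b 0"
      using const by blast
    then show "g i * b i = g i * b 0"
      by (simp only:)
  qed
  then show False
    using assms(3,4) by (simp add: sum_distrib_right[symmetric])
qed

lemma eigvec_sum_eq_0:
  assumes "0 < n"
    and "\<forall>i<n. nbr_sum n a1 a2 b i = (4 - laplace_form n a1 a2 b) * b i"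
    and "laplace_form n a1 a2 b \<noteq> 0"
  shows "(\<Sum>v<n. b v) = 0"
proof -
  have "(\<Sum>v<n. nbr_sum n a1 a2 b v) = (\<Sum>v<n. (4 - laplace_form n a1 a2 b) * b v)"
    by (intro sum.cong refl) (simp add: assms(2))
  then have "4 * (\<Sum>v<n. b v) = (4 - laplace_form n a1 a2 b) * (\<Sum>v<n. b v)"
    by (simp add: sum_nbr_sum[OF assms(1)] sum_distrib_left)
  then show ?thesis
    using assms(3) by (simp add: algebra_simps)
qed

lemma exists_le_weighted_mean:
  fixes w f :: "'a \<Rightarrow> real"
  assumes "finite A" and "\<forall>a\<in>A. 0 \<le> w a" and "0 < (\<Sum>a\<in>A. w a)"
  shows "\<exists>a\<in>A. 0 < w a \<and> f a \<le> (\<Sum>a\<in>A. w a * f a) / (\<Sum>a\<in>A. w a)"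
proof (rule ccontr)
  define r where "r = (\<Sum>a\<in>A. w a * f a) / (\<Sum>a\<in>A. w a)"
  assume "\<not> ?thesis"
  then have above: "\<forall>a\<in>A. 0 < w a \<longrightarrow> r < f a"
    by (auto simp: r_def not_le)
  have le: "\<forall>a\<in>A. w a * r \<le> w a * f a"
    using above assms(2) by (metis less_eq_real_def mult_left_mono mult_zero_left)
  have "\<exists>a\<in>A. w a \<noteq> 0"
  proof (rule ccontr)
    assume "\<not> ?thesis"
    then have "(\<Sum>a\<in>A. w a) = 0"
      by simp
    then show False
      using assms(3) by simp
  qed
  then obtain a where a: "a \<in> A" "w a \<noteq> 0"
    by blast
  then have "w a * r < w a * f a"
    using above assms(2) by (simp add: less_le)
  then have "(\<Sum>a\<in>A. w a * r) < (\<Sum>a\<in>A. w a * f a)"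
    using le assms(1) a(1) by (intro sum_strict_mono_ex1) auto
  moreover have "(\<Sum>a\<in>A. w a * r) = (\<Sum>a\<in>A. w a) * r"
    by (simp add: sum_distrib_right)
  moreover have "\<dots> = (\<Sum>a\<in>A. w a * f a)"
    using assms(3) by (simp add: r_def)
  ultimately show False
    by simp
qed

lemma exists_eigvec_le_rayleigh_quotient:
  assumes "0 < n" and "is_onb n B"
    and "\<forall>b\<in>B. \<forall>i<n. nbr_sum n a1 a2 b i = (4 - laplace_form n a1 a2 b) * b i"
    and "is_vec n g" and "0 < dot n g g"
  shows "\<exists>b\<in>B. dot n g b \<noteq> 0 \<and> laplace_form n a1 a2 b \<le> laplace_form n a1 a2 g / dot n g g"
proof -
  have "finite B"
    using assms(2) by (simp add: is_onb_def)
  moreover have "(\<Sum>b\<in>B. (dot n g b)\<^sup>2) = dot n g g"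
    using onb_parseval[OF assms(2,4)] by simp
  moreover have "(\<Sum>b\<in>B. (dot n g b)\<^sup>2 * laplace_form n a1 a2 b) = laplace_form n a1 a2 g"
    using laplace_form_onb_expansion[OF assms(1-4)] by (simp add: mult.commute)
  ultimately show ?thesis
    using exists_le_weighted_mean[of B "\<lambda>b. (dot n g b)\<^sup>2" "laplace_form n a1 a2"] assms(5)
    by auto
qed

section \<open>A centred tent function\<close>

definition tent :: "nat \<Rightarrow> nat \<Rightarrow> real" where
  "tent n v = (if v < n then real (min v (n - v)) else 0)"

lemma sum_of_nat_atMost: "(\<Sum>w\<le>k. real w) = real k * (real k + 1) / 2"
  by (induction k) (auto simp: field_simps)

lemma sum_of_nat_square_atMost:
  "(\<Sum>w\<le>k. (real w)\<^sup>2) = real k * (real k + 1) * (2 * real k + 1) / 6"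
  by (induction k) (auto simp: field_simps power2_eq_square)

lemma sum_tent_odd:
  fixes F :: "real \<Rightarrow> real"
  assumes "F 0 = 0"
  shows "(\<Sum>v<2*k+1. F (tent (2*k+1) v)) = 2 * (\<Sum>w\<le>k. F (real w))"
proof -
  have "{..<2*k+1} = {..k} \<union> {k+1..2*k}" by auto
  then have "(\<Sum>v<2*k+1. F (tent (2*k+1) v))
      = (\<Sum>v\<le>k. F (tent (2*k+1) v)) + (\<Sum>v\<in>{k+1..2*k}. F (tent (2*k+1) v))"
    by (simp add: sum.union_disjoint ivl_disj_int)
  also have "(\<Sum>v\<le>k. F (tent (2*k+1) v)) = (\<Sum>w\<le>k. F (real w))"
    by (rule sum.cong) (auto simp: tent_def)
  also have "(\<Sum>v\<in>{k+1..2*k}. F (tent (2*k+1) v)) = (\<Sum>w\<in>{1..k}. F (real w))"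
    by (rule sum.reindex_bij_witness[where i = "\<lambda>w. 2*k+1-w" and j = "\<lambda>w. 2*k+1-w"])
       (auto simp: tent_def)
  also have "(\<Sum>w\<in>{1..k}. F (real w)) = (\<Sum>w\<le>k. F (real w))"
    using assms by (simp add: atMost_atLeast0 sum.atLeast_Suc_atMost)
  finally show ?thesis by simp
qed

lemma tent_variance_ge:
  assumes "1 \<le> k"
  shows "real (2*k+1) ^ 3 / 64
    \<le> (\<Sum>v<2*k+1. (tent (2*k+1) v)\<^sup>2) - (\<Sum>v<2*k+1. tent (2*k+1) v)\<^sup>2 / real (2*k+1)"
proof -
  define x where "x = real k"
  have x: "1 \<le> x" using assms by (simp add: x_def)
  have s1: "(\<Sum>v<2*k+1. tent (2*k+1) v) = x * (x + 1)"
    using sum_tent_odd[of "\<lambda>y. y" k] by (simp add: sum_of_nat_atMost x_def)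
  have s2: "(\<Sum>v<2*k+1. (tent (2*k+1) v)\<^sup>2) = x * (x + 1) * (2 * x + 1) / 3"
    using sum_tent_odd[of "\<lambda>y. y\<^sup>2" k] by (simp add: sum_of_nat_square_atMost x_def)
  have ineq: "(2 * x + 1) ^ 3 / 64 \<le> x * (x + 1) * (2 * x + 1) / 3 - (x * (x + 1))\<^sup>2 / (2 * x + 1)"
  proof -
    have "3 * (2 * x + 1) ^ 4 \<le> 64 * (x * (x + 1) * (x * x + x + 1))"
      using x by (simp add: power4_eq_xxxx algebra_simps)
        (smt (verit) mult_nonneg_nonneg mult_left_mono)
    moreover have "x * (x + 1) * (2 * x + 1) / 3 - (x * (x + 1))\<^sup>2 / (2 * x + 1)
        = x * (x + 1) * (x * x + x + 1) / (3 * (2 * x + 1))"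
      using x by (simp add: field_simps power2_eq_square)
    ultimately show ?thesis
      using x by (simp add: field_simps power4_eq_xxxx power3_eq_cube)
  qed
  have "real (2*k+1) = 2 * x + 1"
    by (simp add: x_def)
  then show ?thesis
    unfolding s1 s2 using ineq by (simp only:)
qed

lemma abs_tent_shift_le:
  assumes "v < n" and "a \<le> n"
  shows "\<bar>tent n v - tent n ((v + a) mod n)\<bar> \<le> real a"
proof (cases "v + a < n")
  case True
  then show ?thesis
    using assms by (auto simp: tent_def min_def)
next
  case False
  then have "(v + a) mod n = v + a - n"
    using assms by (simp add: mod_if)
  then show ?thesis
    using assms False by (auto simp: tent_def min_def)
qed

lemma exists_centred_test_vector:
  assumes "odd n" and "3 \<le> n"
  shows "\<exists>g. is_vec n g \<and> (\<Sum>i<n. g i) = 0 \<and> real n ^ 3 / 64 \<le> dot n g g \<and>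
           (\<forall>a\<le>n. shift_energy n a g \<le> real n * (real a)\<^sup>2)"
proof -
  obtain k where n: "n = 2 * k + 1"
    using assms(1) by (metis oddE)
  define m where "m = (\<Sum>i<n. tent n i) / real n"
  define g where "g i = (if i < n then tent n i - m else 0)" for i
  have g: "\<forall>i<n. g i = tent n i - m"
    by (simp add: g_def)
  have n_pos: "0 < real n"
    using assms(2) by simp
  have "(\<Sum>i<n. g i) = (\<Sum>i<n. tent n i) - real n * m"
    using g by (simp add: sum_subtractf)
  then have sum_g: "(\<Sum>i<n. g i) = 0"
    using n_pos by (simp add: m_def)
  have "dot n g g = (\<Sum>i<n. (tent n i - m)\<^sup>2)"
    unfolding dot_def by (rule sum.cong) (simp_all add: g power2_eq_square)
  also have "\<dots> = (\<Sum>i<n. (tent n i)\<^sup>2) - 2 * m * (\<Sum>i<n. tent n i) + real n * m\<^sup>2"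
    by (simp add: power2_diff sum.distrib sum_subtractf algebra_simps sum_distrib_left)
  also have "\<dots> = (\<Sum>i<n. (tent n i)\<^sup>2) - (\<Sum>i<n. tent n i)\<^sup>2 / real n"
    using n_pos by (simp add: m_def power2_eq_square field_simps)
  finally have norm: "real n ^ 3 / 64 \<le> dot n g g"
    using tent_variance_ge[of k] n assms(2) by simp
  have "shift_energy n a g \<le> real n * (real a)\<^sup>2" if "a \<le> n" for a
  proof -
    have "(g v - g ((v + a) mod n))\<^sup>2 \<le> (real a)\<^sup>2" if "v < n" for v
      using abs_tent_shift_le[OF that \<open>a \<le> n\<close>] that n
      by (simp add: g abs_le_square_iff[symmetric])
    then have "shift_energy n a g \<le> (\<Sum>v<n. (real a)\<^sup>2)"
      unfolding shift_energy_def by (intro sum_mono) simp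
    then show ?thesis by simp
  qed
  moreover have "is_vec n g"
    by (simp add: is_vec_def g_def)
  ultimately show ?thesis
    using sum_g norm by blast
qed

lemma exists_test_vector_rayleigh_quotient_le:
  assumes "odd n" and "3 \<le> n" and "a1 \<le> n" and "a2 \<le> n"
  shows "\<exists>g. is_vec n g \<and> (\<Sum>i<n. g i) = 0 \<and> 0 < dot n g g \<and>
           laplace_form n a1 a2 g / dot n g g \<le> 64 * ((real a1)\<^sup>2 + (real a2)\<^sup>2) / (real n)\<^sup>2"
proof -
  let ?K = "(real a1)\<^sup>2 + (real a2)\<^sup>2"
  have n0: "0 < n"
    using assms(2) by simp
  obtain g where g: "is_vec n g" "(\<Sum>i<n. g i) = 0" "real n ^ 3 / 64 \<le> dot n g g"
    and energy: "\<forall>a\<le>n. shift_energy n a g \<le> real n * (real a)\<^sup>2"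
    using exists_centred_test_vector[OF assms(1,2)] by blast
  have "shift_energy n a1 g + shift_energy n a2 g \<le> real n * (real a1)\<^sup>2 + real n * (real a2)\<^sup>2"
    using energy assms(3,4) by (intro add_mono) simp_all
  then have "laplace_form n a1 a2 g \<le> real n * ?K"
    unfolding laplace_form_eq_shift_energy[OF n0] by (simp only: distrib_left)
  moreover have n3: "0 < real n ^ 3 / 64"
    using n0 by simp
  ultimately have "laplace_form n a1 a2 g / dot n g g \<le> real n * ?K / (real n ^ 3 / 64)"
    using g(3) by (intro frac_le) simp_all
  also have "\<dots> = 64 * ?K / (real n)\<^sup>2"
    using n0 by (simp add: field_simps power2_eq_square power3_eq_cube)
  finally show ?thesis
    using g n3 by (metis order.strict_trans2)
qed

section \<open>Mean-zero vectors are small on a window of the a1-cycle\<close>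

lemma exists_up_crossing:
  fixes \<psi> :: "nat \<Rightarrow> real"
  assumes "\<psi> i \<le> 0" and "0 < \<psi> j" and "i \<le> j"
  shows "\<exists>t. \<psi> t \<le> 0 \<and> 0 < \<psi> (Suc t)"
  using assms
proof (induction j)
  case (Suc j)
  show ?case
  proof (cases "\<psi> j \<le> 0")
    case True
    then show ?thesis
      using Suc.prems(2) by blast
  next
    case False
    have "i \<noteq> Suc j"
      using Suc.prems(1,2) by auto
    then have "i \<le> j"
      using Suc.prems(3) by simp
    then show ?thesis
      using Suc.IH Suc.prems(1) False by simp
  qed
qed simp

lemma exists_up_crossing_periodic:
  fixes \<psi> :: "nat \<Rightarrow> real"
  assumes "\<forall>t. \<psi> (t mod n) = \<psi> t" and "(\<Sum>t<n. \<psi> t) = 0" and "\<exists>t<n. \<psi> t \<noteq> 0"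
  shows "\<exists>t. \<psi> t \<le> 0 \<and> 0 < \<psi> (Suc t)"
proof -
  have "\<exists>t<n. 0 < \<psi> t"
  proof (rule ccontr)
    assume "\<not> ?thesis"
    then have "\<forall>t<n. 0 \<le> - \<psi> t"
      by auto
    moreover have "(\<Sum>t<n. - \<psi> t) = 0"
      using assms(2) by (simp add: sum_negf)
    ultimately show False
      using assms(3) by (subst (asm) sum_nonneg_eq_0_iff) auto
  qed
  then obtain j where j: "j < n" "0 < \<psi> j" by blast
  have "\<exists>t<n. \<psi> t \<le> 0"
  proof (rule ccontr)
    assume "\<not> ?thesis"
    then have "0 < (\<Sum>t<n. \<psi> t)"
      using j by (intro sum_pos) (auto simp: not_le)
    then show False
      using assms(2) by simp
  qed
  then obtain i where i: "i < n" "\<psi> i \<le> 0" by blast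
  have "\<psi> (j + n) = \<psi> j"
    using assms(1) by (metis mod_add_self2)
  then show ?thesis
    using exists_up_crossing[of \<psi> i "j + n"] i j by simp
qed

lemma sq_le_after_up_crossing:
  fixes \<psi> :: "nat \<Rightarrow> real"
  assumes "\<psi> t \<le> 0" and "0 < \<psi> (Suc t)" and "j < m"
  shows "(\<psi> (t + j))\<^sup>2 \<le> 4 * real m * (\<Sum>i<m. (\<psi> (Suc (t + i)) - \<psi> (t + i))\<^sup>2)"
proof -
  define d where "d i = \<psi> (Suc (t + i)) - \<psi> (t + i)" for i
  define T where "T = (\<Sum>i<m. \<bar>d i\<bar>)"
  have telescope: "\<psi> (t + j) = \<psi> t + (\<Sum>i<j. d i)"
    by (induction j) (auto simp: d_def)
  have "\<bar>\<psi> t\<bar> \<le> \<bar>d 0\<bar>"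
    using assms(1,2) by (simp add: d_def)
  also have "\<bar>d 0\<bar> \<le> T"
    unfolding T_def using assms(3) by (intro member_le_sum) auto
  finally have "\<bar>\<psi> t\<bar> \<le> T" .
  moreover have "\<bar>\<Sum>i<j. d i\<bar> \<le> T"
    unfolding T_def using assms(3)
    by (intro order.trans[OF sum_abs] sum_mono2) auto
  ultimately have "\<bar>\<psi> (t + j)\<bar> \<le> \<bar>2 * T\<bar>"
    unfolding telescope by linarith
  then have "(\<psi> (t + j))\<^sup>2 \<le> (2 * T)\<^sup>2"
    by (simp only: abs_le_square_iff)
  also have "\<dots> = 4 * T\<^sup>2"
    by (simp add: power2_eq_square)
  also have "T\<^sup>2 \<le> real m * (\<Sum>i<m. (d i)\<^sup>2)"
    unfolding T_def using sum_squared_le_sum_of_squares[of "\<lambda>i. \<bar>d i\<bar>" "{..<m}"]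
    by (simp add: mult.commute)
  finally show ?thesis
    by (simp add: d_def mult.assoc)
qed

lemma sum_periodic_window_le:
  fixes f :: "nat \<Rightarrow> real"
  assumes "0 < n" and "\<forall>t. f (t mod n) = f t" and "\<forall>t. 0 \<le> f t" and "m \<le> n"
  shows "(\<Sum>i<m. f (t + i)) \<le> (\<Sum>i<n. f i)"
proof -
  have "(\<Sum>i<m. f (t + i)) \<le> (\<Sum>i<n. f (t + i))"
    by (rule sum_mono2) (use assms in auto)
  also have "\<dots> = (\<Sum>i<n. f (circ_shift n (int t) i))"
    by (rule sum.cong) (simp_all add: circ_shift_of_nat assms(2) add.commute)
  also have "\<dots> = (\<Sum>i<n. f i)"
    by (rule sum_circ_shift[OF assms(1)])
  finally show ?thesis .
qed

lemma exists_small_window_periodic: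
  fixes \<psi> :: "nat \<Rightarrow> real"
  assumes "0 < n" and "\<forall>t. \<psi> (t mod n) = \<psi> t" and "(\<Sum>t<n. \<psi> t) = 0"
    and "\<exists>t<n. \<psi> t \<noteq> 0" and "m \<le> n"
  shows "\<exists>t. \<forall>j<m. (\<psi> (t + j))\<^sup>2 \<le> 4 * real m * (\<Sum>i<n. (\<psi> i - \<psi> (Suc i))\<^sup>2)"
proof -
  obtain t where t: "\<psi> t \<le> 0" "0 < \<psi> (Suc t)"
    using exists_up_crossing_periodic[OF assms(2-4)] by blast
  define d where "d i = (\<psi> i - \<psi> (Suc i))\<^sup>2" for i
  have d_mod: "\<forall>i. d (i mod n) = d i"
  proof
    fix i
    have "\<psi> (Suc (i mod n)) = \<psi> (Suc i)"
      by (metis assms(2) mod_Suc_eq)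
    then show "d (i mod n) = d i"
      using assms(2) by (simp add: d_def)
  qed
  have "(\<psi> (t + j))\<^sup>2 \<le> 4 * real m * (\<Sum>i<n. d i)" if "j < m" for j
  proof -
    have "(\<Sum>i<m. (\<psi> (Suc (t + i)) - \<psi> (t + i))\<^sup>2) = (\<Sum>i<m. d (t + i))"
      by (simp add: d_def power2_commute)
    then have "(\<psi> (t + j))\<^sup>2 \<le> 4 * real m * (\<Sum>i<m. d (t + i))"
      using sq_le_after_up_crossing[OF t that] by simp
    also have "\<dots> \<le> 4 * real m * (\<Sum>i<n. d i)"
      using sum_periodic_window_le[OF assms(1) d_mod _ assms(5), of t]
      by (intro mult_left_mono) (simp_all add: d_def)
    finally show ?thesis .
  qed
  then show ?thesis
    unfolding d_def by blast
qed

lemma inj_on_mult_mod: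
  fixes a n :: nat
  assumes "coprime a n" and "m \<le> n"
  shows "inj_on (\<lambda>j. ((t + j) * a) mod n) {..<m}"
proof (rule inj_onI)
  fix j j' assume j: "j \<in> {..<m}" "j' \<in> {..<m}"
    and "((t + j) * a) mod n = ((t + j') * a) mod n"
  then have "[t + j = t + j'] (mod n)"
    using cong_mult_rcancel_nat[OF assms(1)] by (simp add: cong_def)
  then have "[j = j'] (mod n)"
    by (simp add: cong_add_lcancel_nat)
  then show "j = j'"
    using j assms(2) by (simp add: cong_def)
qed

lemma bij_betw_mult_mod:
  fixes a n :: nat
  assumes "0 < n" and "coprime a n"
  shows "bij_betw (\<lambda>k. (k * a) mod n) {..<n} {..<n}"
proof -
  have "(\<lambda>k. (k * a) mod n) ` {..<n} \<subseteq> {..<n}"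
    using assms(1) by auto
  then show ?thesis
    using inj_on_mult_mod[OF assms(2) order.refl, of 0]
    by (simp add: bij_betw_def endo_inj_surj)
qed

lemma exists_small_mass_window:
  fixes b :: "nat \<Rightarrow> real"
  assumes "0 < n" and "coprime a n" and "(\<Sum>v<n. b v) = 0" and "\<exists>v<n. b v \<noteq> 0" and "m \<le> n"
  shows "\<exists>S. S \<subseteq> {..<n} \<and> card S = m \<and> mu b S \<le> 4 * (real m)\<^sup>2 * shift_energy n a b"
proof -
  \<comment> \<open>\<psi> reads b along the cycle 0, a, 2 a, ..., which visits every vertex as a is a unit mod n\<close>
  define \<psi> where "\<psi> t = b ((t * a) mod n)" for t
  have bij: "bij_betw (\<lambda>k. (k * a) mod n) {..<n} {..<n}"
    by (rule bij_betw_mult_mod[OF assms(1,2)])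
  have sum_\<psi>: "(\<Sum>t<n. f ((t * a) mod n)) = (\<Sum>v<n. f v)" for f :: "nat \<Rightarrow> real"
    using sum.reindex_bij_betw[OF bij, of f] by simp
  have \<psi>_Suc: "\<psi> (Suc t) = b (((t * a) mod n + a) mod n)" for t
    by (metis \<psi>_def add.commute mult_Suc mod_add_left_eq)
  have "\<forall>t. \<psi> (t mod n) = \<psi> t"
    by (simp add: \<psi>_def mod_mult_left_eq)
  moreover have "(\<Sum>t<n. \<psi> t) = 0"
    using sum_\<psi>[of b] assms(3) by (simp add: \<psi>_def)
  moreover have "\<exists>t<n. \<psi> t \<noteq> 0"
  proof -
    obtain v where v: "v < n" "b v \<noteq> 0"
      using assms(4) by blast
    then have "v \<in> (\<lambda>k. (k * a) mod n) ` {..<n}"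
      using bij unfolding bij_betw_def by simp
    then show ?thesis
      using v(2) by (auto simp: \<psi>_def)
  qed
  moreover have "(\<Sum>i<n. (\<psi> i - \<psi> (Suc i))\<^sup>2) = shift_energy n a b"
    unfolding \<psi>_Suc shift_energy_def
    using sum_\<psi>[of "\<lambda>v. (b v - b ((v + a) mod n))\<^sup>2"] by (simp add: \<psi>_def)
  ultimately have "\<exists>t. \<forall>j<m. (\<psi> (t + j))\<^sup>2 \<le> 4 * real m * shift_energy n a b"
    using exists_small_window_periodic[OF assms(1), of \<psi> m] assms(5) by simp
  then obtain t where small: "\<forall>j<m. (\<psi> (t + j))\<^sup>2 \<le> 4 * real m * shift_energy n a b"
    by blast
  define S where "S = (\<lambda>j. ((t + j) * a) mod n) ` {..<m}"
  have inj: "inj_on (\<lambda>j. ((t + j) * a) mod n) {..<m}"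
    by (rule inj_on_mult_mod[OF assms(2,5)])
  have "mu b S = (\<Sum>j<m. (\<psi> (t + j))\<^sup>2)"
    unfolding mu_def S_def by (simp add: sum.reindex[OF inj] \<psi>_def)
  also have "\<dots> \<le> (\<Sum>j<m. 4 * real m * shift_energy n a b)"
    using small by (intro sum_mono) auto
  finally have "mu b S \<le> 4 * (real m)\<^sup>2 * shift_energy n a b"
    by (simp add: power2_eq_square)
  moreover have "S \<subseteq> {..<n}" and "card S = m"
    using assms(1) card_image[OF inj] by (auto simp: S_def)
  ultimately show ?thesis
    by blast
qed

lemma coprime_less_prime:
  fixes a n :: nat
  assumes "prime n" and "0 < a" and "a < n"
  shows "coprime a n"
proof -
  have "\<not> n dvd a"
    using assms(2,3) by (simp add: nat_dvd_not_less)
  then show ?thesis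
    using prime_imp_coprime[OF assms(1)] by (simp add: coprime_commute)
qed

lemma exists_smooth_eigvec:
  assumes a: "1 \<le> a1" "a1 < a2" and n: "prime n" "2 * a2 < n"
    and B: "is_onb n B" "\<forall>b\<in>B. is_eigvec n (circ_matrix n a1 a2) b"
  shows "\<exists>b\<in>B. (\<exists>v<n. b v \<noteq> 0) \<and> (\<Sum>v<n. b v) = 0 \<and>
           shift_energy n a1 b \<le> 64 * ((real a1)\<^sup>2 + (real a2)\<^sup>2) / (real n)\<^sup>2"
proof -
  let ?Q = "laplace_form n a1 a2"
  have n0: "0 < n"
    using n by simp
  have eig: "\<forall>b\<in>B. \<forall>i<n. nbr_sum n a1 a2 b i = (4 - ?Q b) * b i"
  proof
    fix b assume b: "b \<in> B"
    then have "dot n b b = 1"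
      using onb_dot[OF B(1) b b] by simp
    then show "\<forall>i<n. nbr_sum n a1 a2 b i = (4 - ?Q b) * b i"
      using eigvec_nbr_sum[OF a n(2)] B(2) b by blast
  qed
  have "odd n" and "3 \<le> n"
    using prime_odd_nat[OF n(1)] n(2) a by simp_all
  then obtain g where g: "is_vec n g" "(\<Sum>i<n. g i) = 0" "0 < dot n g g"
    and Qg: "?Q g / dot n g g \<le> 64 * ((real a1)\<^sup>2 + (real a2)\<^sup>2) / (real n)\<^sup>2"
    using exists_test_vector_rayleigh_quotient_le[of n a1 a2] a n(2) by auto
  then obtain b where b: "b \<in> B" "dot n g b \<noteq> 0" and Qb: "?Q b \<le> ?Q g / dot n g g"
    using exists_eigvec_le_rayleigh_quotient[OF n0 B(1) eig g(1)] by blast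
  have "coprime a1 n"
    using coprime_less_prime[OF n(1), of a1] a n by simp
  then have "?Q b \<noteq> 0"
    using laplace_form_neq_0_if_not_orthogonal[OF n0 _ g(2) b(2)] by blast
  then have "(\<Sum>v<n. b v) = 0"
    using eigvec_sum_eq_0[OF n0] eig b(1) by blast
  moreover have "\<exists>v<n. b v \<noteq> 0"
    using B(2) b(1) by (simp add: is_eigvec_def)
  moreover have "shift_energy n a1 b \<le> 64 * ((real a1)\<^sup>2 + (real a2)\<^sup>2) / (real n)\<^sup>2"
    using laplace_form_eq_shift_energy[OF n0, of a1 a2 b] shift_energy_nonneg[of n a2 b] Qb Qg
    by linarith
  ultimately show ?thesis
    using b(1) by blast
qed

lemma exists_eigvec_small_mass:
  assumes "1 \<le> a1" and "a1 < a2" and "prime n" and "2 * a2 < n"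
    and "is_onb n B" and "\<forall>b\<in>B. is_eigvec n (circ_matrix n a1 a2) b" and "m \<le> n"
  shows "\<exists>S \<phi>. S \<subseteq> {..<n} \<and> \<phi> \<in> B \<and> card S = m \<and>
           mu \<phi> S \<le> 256 * ((real a1)\<^sup>2 + (real a2)\<^sup>2) * (real m / real n)\<^sup>2"
proof -
  let ?K = "(real a1)\<^sup>2 + (real a2)\<^sup>2"
  have n0: "0 < n"
    using assms by simp
  obtain b where b: "b \<in> B" "\<exists>v<n. b v \<noteq> 0" "(\<Sum>v<n. b v) = 0"
    and energy: "shift_energy n a1 b \<le> 64 * ?K / (real n)\<^sup>2"
    using exists_smooth_eigvec[OF assms(1-6)] by blast
  have "coprime a1 n"
    using coprime_less_prime[OF assms(3)] assms(1,2,4) by simp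
  then obtain S where S: "S \<subseteq> {..<n}" "card S = m"
    and mass: "mu b S \<le> 4 * (real m)\<^sup>2 * shift_energy n a1 b"
    using exists_small_mass_window[OF n0 _ b(3) b(2) assms(7)] by blast
  note mass
  also have "4 * (real m)\<^sup>2 * shift_energy n a1 b \<le> 4 * (real m)\<^sup>2 * (64 * ?K / (real n)\<^sup>2)"
    using energy by (intro mult_left_mono) auto
  also have "\<dots> = 256 * ?K * (real m / real n)\<^sup>2"
    by (simp add: power_divide)
  finally show ?thesis
    using S b(1) by blast
qed

lemma exists_eigvec_small_mass_fraction:
  assumes "1 \<le> a1" and "a1 < a2" and "prime n" and "2 * a2 < n"
    and "is_onb n B" and "\<forall>b\<in>B. is_eigvec n (circ_matrix n a1 a2) b"
    and "0 < q" and "512 * ((real a1)\<^sup>2 + (real a2)\<^sup>2) \<le> real q"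
  shows "\<exists>S \<phi>. S \<subseteq> {..<n} \<and> \<phi> \<in> B \<and> card S = n div q \<and> mu \<phi> S \<le> 1 / (2 * real q)"
proof -
  let ?K = "(real a1)\<^sup>2 + (real a2)\<^sup>2"
  obtain S \<phi> where S: "S \<subseteq> {..<n}" "\<phi> \<in> B" "card S = n div q"
    and mass: "mu \<phi> S \<le> 256 * ?K * (real (n div q) / real n)\<^sup>2"
    using exists_eigvec_small_mass[OF assms(1-6) div_le_dividend] by blast
  have ratio: "real (n div q) / real n \<le> 1 / real q"
    using assms(7) by (cases "n = 0")
      (simp_all add: field_simps div_times_less_eq_dividend flip: of_nat_mult)
  note mass
  also have "256 * ?K * (real (n div q) / real n)\<^sup>2 \<le> 256 * ?K * (1 / real q)\<^sup>2"
    using ratio by (intro mult_left_mono power_mono) simp_all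
  also have "\<dots> = (256 * ?K / real q) * (1 / real q)"
    by (simp add: power2_eq_square)
  also have "\<dots> \<le> (1 / 2) * (1 / real q)"
    using assms(7,8) by (intro mult_right_mono) (simp_all add: field_simps)
  finally show ?thesis
    using S by auto
qed

lemma tendsto_div_nat_sequentially:
  assumes "0 < q"
  shows "((\<lambda>n::nat. real (n div q) / real n) \<longlongrightarrow> 1 / real q) sequentially"
proof (rule tendsto_sandwich[where f = "\<lambda>n. 1 / real q - inverse (real n)" and h = "\<lambda>n. 1 / real q"])
  show "\<forall>\<^sub>F n in sequentially. 1 / real q - inverse (real n) \<le> real (n div q) / real n"
  proof (rule eventually_sequentiallyI[of 1])
    fix n :: nat assume n: "1 \<le> n"
    have "n < (n div q + 1) * q"
      using assms by (metis div_less_iff_less_mult less_add_one)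
    then have "real n < (real (n div q) + 1) * real q"
      by (metis of_nat_add of_nat_1 of_nat_less_iff of_nat_mult)
    then have "real n / real q - 1 \<le> real (n div q)"
      using assms by (simp add: field_simps)
    then have "(real n / real q - 1) / real n \<le> real (n div q) / real n"
      by (rule divide_right_mono) simp
    moreover have "(real n / real q - 1) / real n = 1 / real q - inverse (real n)"
      using n assms by (simp add: field_simps)
    ultimately show "1 / real q - inverse (real n) \<le> real (n div q) / real n"
      by simp
  qed
  show "\<forall>\<^sub>F n in sequentially. real (n div q) / real n \<le> 1 / real q"
  proof (rule eventually_sequentiallyI[of 1])
    fix n :: nat assume n: "1 \<le> n"
    have "real (n div q) * real q \<le> real n"
      by (metis div_times_less_eq_dividend of_nat_le_iff of_nat_mult)
    then show "real (n div q) / real n \<le> 1 / real q"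
      using n assms by (simp add: field_simps)
  qed
  show "((\<lambda>n. 1 / real q - inverse (real n)) \<longlongrightarrow> 1 / real q) sequentially"
    using tendsto_diff[OF tendsto_const lim_inverse_n', of "1 / real q"]
    by (simp add: inverse_eq_divide)
qed simp

lemma not_tendsto_if_le_on_infinite:
  fixes f :: "nat \<Rightarrow> real"
  assumes "infinite A" and "\<forall>n\<in>A. f n \<le> c" and "c < p"
  shows "\<not> (f \<longlongrightarrow> p) (inf sequentially (principal A))"
proof
  assume "(f \<longlongrightarrow> p) (inf sequentially (principal A))"
  then have "\<forall>\<^sub>F n in inf sequentially (principal A). c < f n"
    using assms(3) by (rule order_tendstoD)
  then obtain N where N: "\<forall>n\<ge>N. n \<in> A \<longrightarrow> c < f n"
    unfolding eventually_inf_principal eventually_sequentially by blast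
  obtain n where "n \<in> A" and "N \<le> n"
    using assms(1) by (meson infinite_nat_iff_unbounded_le)
  then show False
    using N assms(2) by fastforce
qed

theorem theorem2:
  fixes a1 a2 :: nat and \<A> :: "nat set" and \<B> :: "nat \<Rightarrow> (nat \<Rightarrow> real) set"
  assumes "1 \<le> a1" and "a1 < a2"
    and "infinite \<A>"
    and "\<forall>n\<in>\<A>. prime n \<and> n > 2 * a2"
    and "\<forall>n\<in>\<A>. is_onb n (\<B> n) \<and> (\<forall>b\<in>\<B> n. is_eigvec n (circ_matrix n a1 a2) b)"
  shows "\<exists>p::real. 0 < p \<and> p < 1 \<and>
           (\<exists>S :: nat \<Rightarrow> nat set. \<exists>\<phi> :: nat \<Rightarrow> nat \<Rightarrow> real.
              (\<forall>n\<in>\<A>. S n \<subseteq> {..<n} \<and> \<phi> n \<in> \<B> n) \<and>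
              ((\<lambda>n. real (card (S n)) / real n) \<longlongrightarrow> p) (inf sequentially (principal \<A>)) \<and>
              \<not> ((\<lambda>n. mu (\<phi> n) (S n)) \<longlongrightarrow> p) (inf sequentially (principal \<A>)))"
proof -
  define q :: nat where "q = 512 * (a1\<^sup>2 + a2\<^sup>2) + 1"
  define p where "p = 1 / real q"
  have q: "0 < q" "512 * ((real a1)\<^sup>2 + (real a2)\<^sup>2) \<le> real q"
    by (simp_all add: q_def)
  have "1 < q"
    using assms(1) by (simp add: q_def)
  then have p: "0 < p" "p < 1"
    by (simp_all add: p_def)
  have "\<exists>S \<phi>. S \<subseteq> {..<n} \<and> \<phi> \<in> \<B> n \<and> card S = n div q \<and> mu \<phi> S \<le> 1 / (2 * real q)"
    if "n \<in> \<A>" for n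
  proof -
    have "prime n" "2 * a2 < n" "is_onb n (\<B> n)" "\<forall>b\<in>\<B> n. is_eigvec n (circ_matrix n a1 a2) b"
      using assms(4,5) that by auto
    then show ?thesis
      by (rule exists_eigvec_small_mass_fraction[OF assms(1,2) _ _ _ _ q])
  qed
  then obtain S \<phi> where S: "\<forall>n\<in>\<A>. S n \<subseteq> {..<n} \<and> \<phi> n \<in> \<B> n \<and> card (S n) = n div q"
    and mass: "\<forall>n\<in>\<A>. mu (\<phi> n) (S n) \<le> 1 / (2 * real q)"
    by metis
  have "\<forall>\<^sub>F n in inf sequentially (principal \<A>). real (n div q) / real n = real (card (S n)) / real n"
    unfolding eventually_inf_principal using S by simp
  then have "((\<lambda>n. real (card (S n)) / real n) \<longlongrightarrow> p) (inf sequentially (principal \<A>))"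
    by (rule tendsto_cong[THEN iffD1])
      (use tendsto_mono[OF inf_le1 tendsto_div_nat_sequentially[of q]] q in \<open>simp add: p_def\<close>)
  moreover have "\<not> ((\<lambda>n. mu (\<phi> n) (S n)) \<longlongrightarrow> p) (inf sequentially (principal \<A>))"
    using q(1) by (intro not_tendsto_if_le_on_infinite[OF assms(3) mass]) (simp add: p_def field_simps)
  ultimately show ?thesis
    using p S by blast
qed

end
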